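(* Let $\mathfrak g$ be a $(2n+2)$-dimensional real almost abelian Lie algebra with $\dim\mathfrak g\ge 6$ (i.e. $n\ge2$). Then $\mathfrak g$ admits an LCS structure if and only if $\mathfrak g$ is isomorphic to $\mathbb R f_1\ltimes_M\mathbb R^{2n+1}$, where $\mathbb R^{2n+1}$ is an abelian ideal with basis $\{f_2,u_1,\dots,u_n,v_1,\dots,v_n\}$ and $M=\operatorname{ad}_{f_1}|_{\mathbb R^{2n+1}}$ has matrix $M=\begin{pmatrix}\mu & w^{T}\\ 0 & \lambda I_{2n}+B\end{pmatrix}$ for some $\mu,\lambda\in\mathbb R$ with $\lambda\neq 0$, $w\in\mathbb R^{2n}$ and $B\in\mathfrak{sp}(n,\mathbb R)$. In this case $\omega=f^1\wedge f^2+\sum_{i=1}^n u^i\wedge v^i$ is an LCS form with Lee form $\theta=-2\lambda f^1$, where $\{f^1,f^2,u^1,\dots,u^n,v^1,\dots,v^n\}$ is the dual basis. Moreover, $\mathfrak g$ is unimodular if and only if $\lambda=-\frac{\mu}{2n}$.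
   Context: An almost abelian Lie algebra is a real Lie algebra with an abelian ideal of codimension one. An LCS (locally conformal symplectic) structure on a Lie algebra $\mathfrak g$ is a pair $(\omega,\theta)$ with $\omega\in\Lambda^2\mathfrak g^*$ non-degenerate and $\theta\in\mathfrak g^*$ closed and nonzero, such that $d\omega=\theta\wedge\omega$ ($d$ the Chevalley–Eilenberg differential); $\theta$ is the Lee form. $\mathfrak{sp}(n,\mathbb R)$ is the set of real $2n\times2n$ matrices $B$ (acting on $\operatorname{span}\{u_i,v_i\}$ in the given basis) with $B^{T}\Omega+\Omega B=0$, $\Omega=\begin{pmatrix}0&I_n\\-I_n&0\end{pmatrix}$. Unimodular means $\operatorname{tr}\operatorname{ad}_x=0$ for all $x$. *)

theory Defs
  imports "HOL-Analysis.Analysis"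
begin

definition lie_algebra :: "('a::euclidean_space \<Rightarrow> 'a \<Rightarrow> 'a) \<Rightarrow> bool" where
  "lie_algebra br \<longleftrightarrow> bilinear br \<and> (\<forall>x. br x x = 0) \<and>
     (\<forall>x y z. br x (br y z) + br y (br z x) + br z (br x y) = 0)"

definition almost_abelian :: "('a::euclidean_space \<Rightarrow> 'a \<Rightarrow> 'a) \<Rightarrow> bool" where
  "almost_abelian br \<longleftrightarrow> (\<exists>h::'a set. subspace h \<and> dim h = DIM('a) - 1 \<and>
     (\<forall>x\<in>h. \<forall>y\<in>h. br x y = 0) \<and> (\<forall>x. \<forall>y\<in>h. br x y \<in> h))"

definition ce_d2 :: "('a \<Rightarrow> 'a \<Rightarrow> 'a) \<Rightarrow> ('a \<Rightarrow> 'a \<Rightarrow> real) \<Rightarrow> 'a \<Rightarrow> 'a \<Rightarrow> 'a \<Rightarrow> real" where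
  "ce_d2 br \<omega> x y z = - \<omega> (br x y) z + \<omega> (br x z) y - \<omega> (br y z) x"

definition wedge12 :: "('a \<Rightarrow> real) \<Rightarrow> ('a \<Rightarrow> 'a \<Rightarrow> real) \<Rightarrow> 'a \<Rightarrow> 'a \<Rightarrow> 'a \<Rightarrow> real" where
  "wedge12 \<theta> \<omega> x y z = \<theta> x * \<omega> y z - \<theta> y * \<omega> x z + \<theta> z * \<omega> x y"

text \<open>LCS structure (omega, theta) on the Lie algebra (br): omega a non-degenerate
  2-form, theta a nonzero closed 1-form (d theta (x,y) = - theta [x,y]), d omega = theta wedge omega.\<close>
definition LCS :: "('a::euclidean_space \<Rightarrow> 'a \<Rightarrow> 'a) \<Rightarrow> ('a \<Rightarrow> 'a \<Rightarrow> real) \<Rightarrow> ('a \<Rightarrow> real) \<Rightarrow> bool" where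
  "LCS br \<omega> \<theta> \<longleftrightarrow> bilinear \<omega> \<and> (\<forall>x. \<omega> x x = 0) \<and>
     (\<forall>x. (\<forall>y. \<omega> x y = 0) \<longrightarrow> x = 0) \<and>
     linear \<theta> \<and> \<theta> \<noteq> (\<lambda>x. 0) \<and> (\<forall>x y. \<theta> (br x y) = 0) \<and>
     (\<forall>x y z. ce_d2 br \<omega> x y z = wedge12 \<theta> \<omega> x y z)"

definition unimodular :: "('a::euclidean_space \<Rightarrow> 'a \<Rightarrow> 'a) \<Rightarrow> bool" where
  "unimodular br \<longleftrightarrow> (\<forall>x. (\<Sum>b\<in>Basis. br x b \<bullet> b) = 0)"

text \<open>The matrix Omega = [[0, I_n], [-I_n, 0]], indices 0..<2n.\<close>
definition Omega :: "nat \<Rightarrow> nat \<Rightarrow> nat \<Rightarrow> real" where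
  "Omega n i j = (if i < n \<and> j = i + n then 1 else if j < n \<and> i = j + n then -1 else 0)"

definition in_sp :: "nat \<Rightarrow> (nat \<Rightarrow> nat \<Rightarrow> real) \<Rightarrow> bool" where
  "in_sp n B \<longleftrightarrow> (\<forall>i<2*n. \<forall>k<2*n.
     (\<Sum>j<2*n. B j i * Omega n j k) + (\<Sum>j<2*n. Omega n i j * B j k) = 0)"

definition is_basis_fam :: "nat \<Rightarrow> (nat \<Rightarrow> 'a::euclidean_space) \<Rightarrow> bool" where
  "is_basis_fam N e \<longleftrightarrow> (\<forall>c. (\<Sum>i<N. c i *\<^sub>R e i) = 0 \<longrightarrow> (\<forall>i<N. c i = 0)) \<and>
     span (e ` {..<N}) = UNIV"

definition dual_coord :: "nat \<Rightarrow> (nat \<Rightarrow> 'a::euclidean_space) \<Rightarrow> nat \<Rightarrow> 'a \<Rightarrow> real" where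
  "dual_coord N e k x = (THE c. (\<forall>i\<ge>N. c i = 0) \<and> x = (\<Sum>i<N. c i *\<^sub>R e i)) k"

text \<open>The basis e = (f1, f2, u_1..u_n, v_1..v_n), i.e. e 0 = f1, e 1 = f2,
  e (j+2) = u_(j+1) for j < n and e (j+2) = v_(j-n+1) for n \<le> j < 2n,
  exhibits the Lie algebra as R f1 \<ltimes>_M R^(2n+1), R^(2n+1) = span{e 1..e (2n+1)} abelian,
  M = ad_f1 restricted, with matrix [[mu, w^T],[0, lam I_2n + B]] in the basis
  (f2, u_1..u_n, v_1..v_n) (columns = images of basis vectors).\<close>
definition semidirect_form ::
  "('a::euclidean_space \<Rightarrow> 'a \<Rightarrow> 'a) \<Rightarrow> nat \<Rightarrow> (nat \<Rightarrow> 'a) \<Rightarrow> real \<Rightarrow> real \<Rightarrow>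
   (nat \<Rightarrow> real) \<Rightarrow> (nat \<Rightarrow> nat \<Rightarrow> real) \<Rightarrow> bool" where
  "semidirect_form br n e mu lam w B \<longleftrightarrow>
     is_basis_fam (2*n+2) e \<and> in_sp n B \<and>
     (\<forall>a\<in>{1..2*n+1}. \<forall>b\<in>{1..2*n+1}. br (e a) (e b) = 0) \<and>
     br (e 0) (e 1) = mu *\<^sub>R e 1 \<and>
     (\<forall>j<2*n. br (e 0) (e (j+2)) =
        w j *\<^sub>R e 1 + (\<Sum>i<2*n. ((if i = j then lam else 0) + B i j) *\<^sub>R e (i+2)))"

text \<open>omega = f^1 \<and> f^2 + sum_i u^i \<and> v^i, with (a \<and> b)(x,y) = a x b y - a y b x.\<close>
definition omega_std :: "nat \<Rightarrow> (nat \<Rightarrow> 'a::euclidean_space) \<Rightarrow> 'a \<Rightarrow> 'a \<Rightarrow> real" where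
  "omega_std n e x y =
     (let c = dual_coord (2*n+2) e in
       c 0 x * c 1 y - c 0 y * c 1 x +
       (\<Sum>i<n. c (i+2) x * c (i+n+2) y - c (i+2) y * c (i+n+2) x))"

end

theory Submission
  imports Defs
begin

(* Let h be the abelian ideal, f1 a vector outside it and (omega, theta) an LCS structure.
  Evaluating d omega = theta \<and> omega on h shows that a nonzero theta on h would force
  the radical of omega restricted to h to have dimension at least dim h - 2 \<ge> 3, whereas
  nondegeneracy of omega (h has codimension one) makes that radical at most a line. Hence
  theta = theta(f1) f^1, and evaluating on (f1, y, z) with y, z in h gives
  omega([f1,y],z) + omega(y,[f1,z]) = -theta(f1) omega(y,z). Since dim h is odd the radical is
  a line R f2, a Darboux basis u, v of omega on a complement of it completes f1, f2 to a basis,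
  and the identity says exactly that ad f1 is lambda + B on the symplectic part with
  B in sp(n) and lambda = -theta(f1)/2. Conversely, the same identity shows that omega_std is
  LCS for such a semidirect form, and tr ad f1 = mu + 2 n lambda because tr B = 0. *)

section \<open>Linear algebra in a basis\<close>

lemma bilinear_eq_0_on_span:
  fixes F :: "'a::real_vector \<Rightarrow> 'a \<Rightarrow> 'c::real_vector"
  assumes "\<And>y. linear (\<lambda>x. F x y)" and "\<And>x. linear (\<lambda>y. F x y)"
    and "span S = UNIV" and "\<And>a b. a \<in> S \<Longrightarrow> b \<in> S \<Longrightarrow> F a b = 0"
  shows "F x y = 0"
proof -
  have "F a y = 0" if "a \<in> S" for a
    using linear_eq_0_on_span[of "F a" S y] assms(2-4) that by auto
  then show ?thesis
    using linear_eq_0_on_span[of "\<lambda>x. F x y" S x] assms(1,3) by auto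
qed

lemma trilinear_eq_0_on_span:
  fixes F :: "'a::real_vector \<Rightarrow> 'a \<Rightarrow> 'a \<Rightarrow> 'c::real_vector"
  assumes "\<And>y z. linear (\<lambda>x. F x y z)" and "\<And>x z. linear (\<lambda>y. F x y z)"
    and "\<And>x y. linear (\<lambda>z. F x y z)" and "span S = UNIV"
    and "\<And>a b c. a \<in> S \<Longrightarrow> b \<in> S \<Longrightarrow> c \<in> S \<Longrightarrow> F a b c = 0"
  shows "F x y z = 0"
proof -
  have "F a b z = 0" if "a \<in> S" "b \<in> S" for a b
    using linear_eq_0_on_span[of "F a b" S z] assms(3-5) that by auto
  then show ?thesis
    using bilinear_eq_0_on_span[of "\<lambda>x y. F x y z"] assms(1,2,4) by blast
qed

lemma inj_on_if_coeffs_unique: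
  fixes g :: "nat \<Rightarrow> 'a::real_vector"
  assumes ind: "\<And>c. (\<Sum>i<N. c i *\<^sub>R g i) = 0 \<Longrightarrow> \<forall>i<N. c i = 0"
  shows "inj_on g {..<N}"
proof (rule inj_onI, rule ccontr)
  fix i j assume ij: "i \<in> {..<N}" "j \<in> {..<N}" "g i = g j" "i \<noteq> j"
  let ?c = "\<lambda>k. (if k = i then 1 else 0) - (if k = j then 1 else 0) :: real"
  have "(\<Sum>k<N. ?c k *\<^sub>R g k) = g i - g j"
    using ij by (simp add: scaleR_left_diff_distrib sum_subtractf if_distrib[of "\<lambda>t. t *\<^sub>R _"] cong: if_cong)
  also have "\<dots> = 0" using ij by simp
  finally have "?c i = 0" using ind[of ?c] ij by blast
  then show False using ij by simp
qed

lemma dim_image_if_coeffs_unique: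
  fixes g :: "nat \<Rightarrow> 'a::euclidean_space"
  assumes ind: "\<And>c. (\<Sum>i<N. c i *\<^sub>R g i) = 0 \<Longrightarrow> \<forall>i<N. c i = 0"
  shows "dim (g ` {..<N}) = N"
proof -
  have inj: "inj_on g {..<N}" using inj_on_if_coeffs_unique ind by blast
  have "independent (g ` {..<N})"
  proof (subst independent_explicit, intro conjI allI impI ballI)
    fix c :: "'a \<Rightarrow> real" and v
    assume s: "(\<Sum>v\<in>g ` {..<N}. c v *\<^sub>R v) = 0" and "v \<in> g ` {..<N}"
    then obtain k where k: "k < N" "v = g k" by auto
    have "(\<Sum>i<N. c (g i) *\<^sub>R g i) = 0" using s by (simp add: sum.reindex[OF inj])
    then show "c v = 0" using ind[of "\<lambda>i. c (g i)"] k by auto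
  qed simp
  then show ?thesis using dim_eq_card_independent card_image[OF inj] by (metis card_lessThan)
qed

lemma dim_le_dim_kernel_plus_1:
  fixes S :: "'a::euclidean_space set"
  assumes S: "subspace S" and a: "linear \<alpha>"
  shows "dim S \<le> dim {x\<in>S. \<alpha> x = (0::real)} + 1"
proof (cases "\<forall>x\<in>S. \<alpha> x = 0")
  case True
  then have "{x\<in>S. \<alpha> x = 0} = S" by auto
  then show ?thesis by simp
next
  case False
  then obtain s0 where s0: "s0 \<in> S" "\<alpha> s0 \<noteq> 0" by auto
  define s where "s = (1 / \<alpha> s0) *\<^sub>R s0"
  have sS: "s \<in> S" unfolding s_def by (rule subspace_scale[OF S s0(1)])
  have s1: "\<alpha> s = 1" unfolding s_def linear_scale[OF a] using s0(2) by simp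
  let ?K = "{x\<in>S. \<alpha> x = 0}"
  have "S \<subseteq> span (insert s ?K)"
  proof
    fix x assume x: "x \<in> S"
    have "x - \<alpha> x *\<^sub>R s \<in> ?K"
      using subspace_diff[OF S x subspace_scale[OF S sS]] s1 by (simp add: linear_diff[OF a] linear_scale[OF a])
    then show "x \<in> span (insert s ?K)" unfolding span_insert by (blast intro: span_base)
  qed
  then have "dim S \<le> dim (span (insert s ?K))" by (rule dim_subset)
  also have "\<dots> \<le> dim ?K + 1" by (simp add: dim_insert)
  finally show ?thesis .
qed

lemma is_basis_fam_card:
  fixes e :: "nat \<Rightarrow> 'a::euclidean_space"
  assumes "is_basis_fam N e"
  shows "N = DIM('a)"
  using assms dim_image_if_coeffs_unique[where N=N and g=e] dim_span[of "e ` {..<N}"] dim_UNIV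
  unfolding is_basis_fam_def by simp

lemma is_basis_fam_expansion:
  fixes e :: "nat \<Rightarrow> 'a::euclidean_space"
  assumes B: "is_basis_fam N e"
  obtains c where "x = (\<Sum>i<N. c i *\<^sub>R e i)"
proof -
  have inj: "inj_on e {..<N}"
    using B inj_on_if_coeffs_unique unfolding is_basis_fam_def by blast
  have "x \<in> span (e ` {..<N})" using B unfolding is_basis_fam_def by simp
  then obtain u where "x = (\<Sum>v\<in>e ` {..<N}. u v *\<^sub>R v)" by (auto simp: span_finite)
  then have "x = (\<Sum>i<N. u (e i) *\<^sub>R e i)" by (simp add: sum.reindex[OF inj])
  then show thesis by (rule that)
qed

lemma dual_coord_spec:
  fixes e :: "nat \<Rightarrow> 'a::euclidean_space"
  assumes B: "is_basis_fam N e"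
  shows "(\<forall>i\<ge>N. dual_coord N e i x = 0) \<and> x = (\<Sum>i<N. dual_coord N e i x *\<^sub>R e i)"
proof -
  have ind: "\<And>c. (\<Sum>i<N. c i *\<^sub>R e i) = 0 \<Longrightarrow> \<forall>i<N. c i = 0"
    using B unfolding is_basis_fam_def by blast
  obtain c where c: "x = (\<Sum>i<N. c i *\<^sub>R e i)" using is_basis_fam_expansion[OF B] .
  let ?c = "\<lambda>i. if i < N then c i else 0"
  let ?P = "\<lambda>d. (\<forall>i\<ge>N. d i = 0) \<and> x = (\<Sum>i<N. d i *\<^sub>R e i)"
  have P: "?P ?c" using c by simp
  have "d = ?c" if "?P d" for d
  proof
    fix i
    have "(\<Sum>i<N. (d i - ?c i) *\<^sub>R e i) = 0"
      using that P by (simp add: scaleR_left_diff_distrib sum_subtractf)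
    then show "d i = ?c i" using ind[of "\<lambda>i. d i - ?c i"] that by (cases "i < N") auto
  qed
  then have "(\<lambda>i. dual_coord N e i x) = ?c"
    unfolding dual_coord_def using P by (intro the_equality) auto
  then show ?thesis using P by (simp add: fun_eq_iff del: sum.lessThan_Suc)
qed

lemma dual_coord_expansion:
  fixes e :: "nat \<Rightarrow> 'a::euclidean_space"
  shows "is_basis_fam N e \<Longrightarrow> x = (\<Sum>i<N. dual_coord N e i x *\<^sub>R e i)"
  using dual_coord_spec by blast

lemma dual_coord_unique:
  fixes e :: "nat \<Rightarrow> 'a::euclidean_space"
  assumes B: "is_basis_fam N e" and x: "x = (\<Sum>i<N. c i *\<^sub>R e i)" and k: "k < N"
  shows "dual_coord N e k x = c k"
proof -
  have "(\<Sum>i<N. (dual_coord N e i x - c i) *\<^sub>R e i) = 0"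
    using dual_coord_expansion[OF B, of x] x by (simp add: scaleR_left_diff_distrib sum_subtractf)
  then show ?thesis using B k unfolding is_basis_fam_def by fastforce
qed

lemma dual_coord_basis:
  fixes e :: "nat \<Rightarrow> 'a::euclidean_space"
  assumes B: "is_basis_fam N e" and j: "j < N"
  shows "dual_coord N e k (e j) = (if k = j then 1 else 0)"
proof (cases "k < N")
  case True
  have "e j = (\<Sum>i<N. (if i = j then 1 else 0) *\<^sub>R e i)"
    using j by (simp add: if_distrib[of "\<lambda>t. t *\<^sub>R _"] cong: if_cong)
  from dual_coord_unique[OF B this True] show ?thesis by simp
next
  case False
  then show ?thesis using dual_coord_spec[OF B, of "e j"] j by auto
qed

lemma linear_dual_coord:
  fixes e :: "nat \<Rightarrow> 'a::euclidean_space"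
  assumes B: "is_basis_fam N e"
  shows "linear (dual_coord N e k)"
proof (cases "k < N")
  case True
  show ?thesis
  proof (rule linearI)
    fix x y
    have "x + y = (\<Sum>i<N. (dual_coord N e i x + dual_coord N e i y) *\<^sub>R e i)"
      using dual_coord_expansion[OF B, of x] dual_coord_expansion[OF B, of y]
      by (simp add: scaleR_add_left sum.distrib)
    from dual_coord_unique[OF B this True]
    show "dual_coord N e k (x + y) = dual_coord N e k x + dual_coord N e k y" .
  next
    fix r and x :: 'a
    have "r *\<^sub>R x = (\<Sum>i<N. (r * dual_coord N e i x) *\<^sub>R e i)"
      using dual_coord_expansion[OF B, of x] by (metis (no_types, lifting) scaleR_scaleR scaleR_sum_right sum.cong)
    from dual_coord_unique[OF B this True]
    show "dual_coord N e k (r *\<^sub>R x) = r *\<^sub>R dual_coord N e k x" by simp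
  qed
next
  case False
  then have "dual_coord N e k = (\<lambda>x. 0)" using dual_coord_spec[OF B] by auto
  then show ?thesis by (simp add: module_hom_zero)
qed

lemma trace_in_basis:
  fixes e :: "nat \<Rightarrow> 'a::euclidean_space"
  assumes B: "is_basis_fam N e" and T: "linear T"
  shows "(\<Sum>b\<in>Basis. T b \<bullet> b) = (\<Sum>i<N. dual_coord N e i (T (e i)))"
proof -
  have lc: "linear (\<lambda>x. dual_coord N e i (T x))" for i
    using linear_compose[OF T linear_dual_coord[OF B]] by (simp add: o_def)
  have "(\<Sum>b\<in>Basis. T b \<bullet> b) = (\<Sum>b\<in>Basis. (\<Sum>i<N. dual_coord N e i (T b) *\<^sub>R e i) \<bullet> b)"
    by (simp flip: dual_coord_expansion[OF B])
  also have "\<dots> = (\<Sum>i<N. \<Sum>b\<in>Basis. dual_coord N e i (T b) * (e i \<bullet> b))"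
    by (simp add: inner_sum_left sum.swap[of _ Basis])
  also have "\<dots> = (\<Sum>i<N. dual_coord N e i (T (\<Sum>b\<in>Basis. (e i \<bullet> b) *\<^sub>R b)))"
    by (simp add: linear_sum[OF lc] linear_scale[OF lc] mult.commute)
  also have "\<dots> = (\<Sum>i<N. dual_coord N e i (T (e i)))"
    by (simp add: euclidean_representation)
  finally show ?thesis .
qed

lemma bilinear_lsum: "bilinear h \<Longrightarrow> h (sum f S) y = (\<Sum>i\<in>S. h (f i) y)"
  and bilinear_rsum: "bilinear h \<Longrightarrow> h y (sum f S) = (\<Sum>i\<in>S. h y (f i))"
  unfolding bilinear_def using linear_sum[of "\<lambda>x. h x y"] linear_sum[of "h y"] by auto

section \<open>Darboux frames\<close>

lemma alternating_antisym:
  assumes "bilinear \<omega>" and "\<And>x. \<omega> x x = (0::real)"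
  shows "\<omega> y x = - \<omega> x y"
  using assms(2)[of "x + y"] assms(2)[of x] assms(2)[of y]
  by (simp add: bilinear_ladd[OF assms(1)] bilinear_radd[OF assms(1)])

definition symplectic_projection ::
  "('a::real_vector \<Rightarrow> 'a \<Rightarrow> real) \<Rightarrow> nat \<Rightarrow> (nat \<Rightarrow> 'a) \<Rightarrow> (nat \<Rightarrow> 'a) \<Rightarrow> 'a \<Rightarrow> 'a" where
  "symplectic_projection \<omega> m u v x = (\<Sum>i<m. \<omega> x (v i) *\<^sub>R u i - \<omega> x (u i) *\<^sub>R v i)"

definition darboux_frame ::
  "('a::real_vector \<Rightarrow> 'a \<Rightarrow> real) \<Rightarrow> 'a set \<Rightarrow> nat \<Rightarrow> (nat \<Rightarrow> 'a) \<Rightarrow> (nat \<Rightarrow> 'a) \<Rightarrow> bool" where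
  "darboux_frame \<omega> V m u v \<longleftrightarrow>
     (\<forall>i<m. u i \<in> V \<and> v i \<in> V) \<and>
     (\<forall>i<m. \<forall>j<m. \<omega> (u i) (v j) = (if i = j then 1 else 0) \<and> \<omega> (u i) (u j) = 0 \<and> \<omega> (v i) (v j) = 0) \<and>
     (\<forall>x\<in>V. \<forall>y\<in>V. \<omega> (x - symplectic_projection \<omega> m u v x) y = 0)"

lemma symplectic_projection_Suc:
  "symplectic_projection \<omega> (Suc m) (case_nat u0 u) (case_nat v0 v) x =
     (\<omega> x v0 *\<^sub>R u0 - \<omega> x u0 *\<^sub>R v0) + symplectic_projection \<omega> m u v x"
  unfolding symplectic_projection_def by (subst sum.lessThan_Suc_shift) simp

context
  fixes \<omega> :: "'a::real_vector \<Rightarrow> 'a \<Rightarrow> real" and V :: "'a set" and u0 v0 :: 'a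
    and m :: nat and u v :: "nat \<Rightarrow> 'a"
  assumes bl: "bilinear \<omega>" and alt: "\<And>x. \<omega> x x = 0" and V: "subspace V"
    and u0: "u0 \<in> V" and v0: "v0 \<in> V" and uv: "\<omega> u0 v0 = 1"
    and frame: "darboux_frame \<omega> {x\<in>V. \<omega> u0 x = 0 \<and> \<omega> v0 x = 0} m u v"
begin

private lemmas bs = bilinear_ladd[OF bl] bilinear_radd[OF bl] bilinear_lsub[OF bl] bilinear_rsub[OF bl]
  bilinear_lmul[OF bl] bilinear_rmul[OF bl] bilinear_lzero[OF bl] bilinear_rzero[OF bl]

private lemma antisym: "\<omega> y x = - \<omega> x y"
  using alternating_antisym[OF bl alt] .

private lemma frame_orthogonal:
  assumes "i < m"
  shows "u i \<in> V" "v i \<in> V" "\<omega> u0 (u i) = 0" "\<omega> u0 (v i) = 0" "\<omega> v0 (u i) = 0" "\<omega> v0 (v i) = 0"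
    "\<omega> (u i) u0 = 0" "\<omega> (v i) u0 = 0" "\<omega> (u i) v0 = 0" "\<omega> (v i) v0 = 0"
  using frame assms antisym[of u0] antisym[of v0] unfolding darboux_frame_def by auto

private lemma split_off:
  assumes "x \<in> V"
  shows "x - (\<omega> x v0 *\<^sub>R u0 - \<omega> x u0 *\<^sub>R v0) \<in> {x\<in>V. \<omega> u0 x = 0 \<and> \<omega> v0 x = 0}"
  using assms u0 v0 V uv alt antisym[of u0 v0] antisym[of u0 x] antisym[of v0 x]
  by (auto intro: subspace_diff subspace_scale simp: bs)

private lemma projection_orthogonal:
  assumes x: "x \<in> V" and y: "y \<in> V"
  shows "\<omega> (x - symplectic_projection \<omega> (Suc m) (case_nat u0 u) (case_nat v0 v) x) y = 0"
proof -
  define p where "p = x - (\<omega> x v0 *\<^sub>R u0 - \<omega> x u0 *\<^sub>R v0)"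
  define z where "z = p - symplectic_projection \<omega> m u v p"
  have "symplectic_projection \<omega> m u v x = symplectic_projection \<omega> m u v p"
    unfolding symplectic_projection_def p_def using frame_orthogonal by (intro sum.cong) (simp_all add: bs)
  then have xz: "x - symplectic_projection \<omega> (Suc m) (case_nat u0 u) (case_nat v0 v) x = z"
    unfolding symplectic_projection_Suc p_def z_def by simp
  define W where "W = {x\<in>V. \<omega> u0 x = 0 \<and> \<omega> v0 x = 0}"
  have W: "subspace W" using V unfolding W_def subspace_def by (auto simp: bs)
  have "u i \<in> W" "v i \<in> W" if "i < m" for i using frame_orthogonal[OF that] unfolding W_def by auto
  moreover have "p \<in> W" using split_off[OF x] unfolding p_def W_def .
  ultimately have "z \<in> W" unfolding z_def symplectic_projection_def
    by (intro subspace_diff[OF W] subspace_sum[OF W] subspace_scale[OF W]) auto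
  then have "\<omega> u0 z = 0" "\<omega> v0 z = 0" unfolding W_def by auto
  moreover have "\<omega> z (y - (\<omega> y v0 *\<^sub>R u0 - \<omega> y u0 *\<^sub>R v0)) = 0"
    using frame split_off[OF x] split_off[OF y] unfolding darboux_frame_def z_def p_def by blast
  ultimately have "\<omega> z y = 0" using antisym[of u0 z] antisym[of v0 z] by (simp add: bs)
  then show ?thesis using xz by simp
qed

lemma darboux_frame_Suc: "darboux_frame \<omega> V (Suc m) (case_nat u0 u) (case_nat v0 v)"
  unfolding darboux_frame_def
proof (intro conjI allI impI ballI)
  fix i j assume i: "i < Suc m" and j: "j < Suc m"
  show "case_nat u0 u i \<in> V" "case_nat v0 v i \<in> V"
    using i u0 v0 frame_orthogonal by (cases i; simp)+
  show "\<omega> (case_nat u0 u i) (case_nat v0 v j) = (if i = j then 1 else 0)"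
    "\<omega> (case_nat u0 u i) (case_nat u0 u j) = 0" "\<omega> (case_nat v0 v i) (case_nat v0 v j) = 0"
    using i j frame_orthogonal alt uv frame unfolding darboux_frame_def by (cases i; cases j; simp)+
qed (rule projection_orthogonal)

end

theorem darboux_frame_exists:
  fixes \<omega> :: "'a::euclidean_space \<Rightarrow> 'a \<Rightarrow> real"
  assumes bl: "bilinear \<omega>" and alt: "\<And>x. \<omega> x x = 0" and "subspace V"
  shows "\<exists>m u v. darboux_frame \<omega> V m u v"
  using \<open>subspace V\<close>
proof (induction "dim V" arbitrary: V rule: less_induct)
  case less
  show ?case
  proof (cases "\<forall>x\<in>V. \<forall>y\<in>V. \<omega> x y = 0")
    case True
    then have "darboux_frame \<omega> V 0 u v" for u v
      unfolding darboux_frame_def symplectic_projection_def by simp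
    then show ?thesis by blast
  next
    case False
    then obtain u0 y0 where xy: "u0 \<in> V" "y0 \<in> V" "\<omega> u0 y0 \<noteq> 0" by auto
    define v0 where "v0 = (1 / \<omega> u0 y0) *\<^sub>R y0"
    have v0V: "v0 \<in> V" using xy less.prems by (simp add: v0_def subspace_scale)
    have uv: "\<omega> u0 v0 = 1" using xy by (simp add: v0_def bilinear_rmul[OF bl])
    define V' where "V' = {x\<in>V. \<omega> u0 x = 0 \<and> \<omega> v0 x = 0}"
    have sV': "subspace V'"
      using less.prems unfolding V'_def subspace_def
      by (auto simp: bilinear_radd[OF bl] bilinear_rmul[OF bl] bilinear_rzero[OF bl])
    have "u0 \<notin> V'"
      using uv alternating_antisym[OF bl alt, of v0 u0] unfolding V'_def by auto
    then have "V' \<subset> V" using xy(1) unfolding V'_def by blast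
    then have "dim V' < dim V"
      using dim_psubset[of V' V] sV' less.prems by (simp add: span_eq_iff[THEN iffD2])
    then obtain m u v where "darboux_frame \<omega> V' m u v" using less.hyps sV' by blast
    then show ?thesis
      using darboux_frame_Suc[OF bl alt less.prems xy(1) v0V uv] unfolding V'_def by blast
  qed
qed

section \<open>The matrix Omega and sp(n)\<close>

lemma sum_delta_mult_left:
  "(\<Sum>i<(N::nat). (if i = j then c else 0) * (X i :: real)) = (if j < N then c * X j else 0)"
proof -
  have "(\<Sum>i<N. (if i = j then c else 0) * X i) = (\<Sum>i<N. if i = j then c * X j else 0)"
    by (rule sum.cong) auto
  then show ?thesis by simp
qed

lemma sum_delta_mult_right:
  "(\<Sum>i<(N::nat). (X i :: real) * (if i = j then c else 0)) = (if j < N then X j * c else 0)"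
  using sum_delta_mult_left[where N=N and j=j and c=c and X=X] by (simp add: mult.commute)

lemma sum_lessThan_Suc_Suc:
  "(\<Sum>k<Suc (Suc K). g k) = g 0 + g 1 + (\<Sum>i<K. g (i + 2))"
  by (simp add: sum.lessThan_Suc_shift del: sum.lessThan_Suc) (simp add: numeral_2_eq_2 add.assoc)

lemma less_add_2_cases:
  assumes "(a::nat) < K + 2"
  obtains "a = 0" | "a = 1" | p where "p < K" "a = p + 2"
proof -
  consider "a = 0" | "a = 1" | "2 \<le> a" by linarith
  then show thesis
  proof cases
    case 3
    then have "a - 2 < K" "a = (a - 2) + 2" using assms by simp_all
    then show thesis by (rule that(3))
  qed (use that in blast)+
qed

lemma sum_lessThan_double:
  "(\<Sum>i<2 * n. f i) = (\<Sum>i<(n::nat). f i) + (\<Sum>i<n. f (i + n))"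
proof -
  have "(\<Sum>i<2 * n. f i) = (\<Sum>i=0..<n. f i) + (\<Sum>i=n..<2*n. f i)"
    by (simp only: atLeast0LessThan[symmetric]) (rule sum.atLeastLessThan_concat[symmetric]; simp)
  also have "(\<Sum>i=n..<2*n. f i) = (\<Sum>i=0+n..<n+n. f i)" by (simp add: mult_2)
  also have "\<dots> = (\<Sum>i=0..<n. f (i + n))" by (rule sum.shift_bounds_nat_ivl)
  finally show ?thesis by (simp only: atLeast0LessThan)
qed

lemma Omega_upper_right: "i < n \<Longrightarrow> Omega n j (i + n) = (if j = i then 1 else 0)"
  and Omega_lower_left: "j < n \<Longrightarrow> Omega n i j = (if i = j + n then -1 else 0)"
  and Omega_top_rows: "i < n \<Longrightarrow> Omega n i j = (if j = i + n then 1 else 0)"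
  unfolding Omega_def by simp_all

lemma in_sp_trace:
  assumes "in_sp n B"
  shows "(\<Sum>i<2 * n. B i i) = 0"
proof -
  have "B i i + B (i + n) (i + n) = 0" if i: "i < n" for i
  proof -
    have "(\<Sum>j<2*n. B j i * Omega n j (i + n)) + (\<Sum>j<2*n. Omega n i j * B j (i + n)) = 0"
      using assms i unfolding in_sp_def by simp
    moreover have "(\<Sum>j<2*n. B j i * Omega n j (i + n)) = B i i"
      using i by (simp add: Omega_upper_right sum_delta_mult_right)
    moreover have "(\<Sum>j<2*n. Omega n i j * B j (i + n)) = B (i + n) (i + n)"
      using i by (simp add: Omega_top_rows sum_delta_mult_left)
    ultimately show ?thesis by simp
  qed
  then show ?thesis by (simp add: sum_lessThan_double flip: sum.distrib)
qed

lemma Omega_antisym: "Omega n q p = - Omega n p q"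
  unfolding Omega_def by auto

lemma in_sp_Omega_identity:
  assumes "in_sp n B" and p: "p < 2 * n" and q: "q < 2 * n"
  shows "(\<Sum>r<2*n. ((if r = p then lam else 0) + B r p) * Omega n r q)
       - (\<Sum>r<2*n. ((if r = q then lam else 0) + B r q) * Omega n r p) = 2 * lam * Omega n p q"
proof -
  have "(\<Sum>r<2*n. B r p * Omega n r q) + (\<Sum>r<2*n. Omega n p r * B r q) = 0"
    using assms unfolding in_sp_def by blast
  moreover have "(\<Sum>r<2*n. ((if r = p then lam else 0) + B r p) * Omega n r q)
      = lam * Omega n p q + (\<Sum>r<2*n. B r p * Omega n r q)"
    using p by (simp add: distrib_right sum.distrib sum_delta_mult_left)
  moreover have "(\<Sum>r<2*n. ((if r = q then lam else 0) + B r q) * Omega n r p)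
      = - (\<Sum>r<2*n. Omega n p r * ((if r = q then lam else 0) + B r q))"
    by (simp add: Omega_antisym[of n _ p] sum_negf mult.commute)
  moreover have "(\<Sum>r<2*n. Omega n p r * ((if r = q then lam else 0) + B r q))
      = Omega n p q * lam + (\<Sum>r<2*n. Omega n p r * B r q)"
    using q by (simp add: distrib_left sum.distrib sum_delta_mult_right)
  ultimately show ?thesis by simp
qed

lemma Omega_combination_eq_0:
  assumes z: "\<And>k. k < 2*m \<Longrightarrow> (\<Sum>i<2*m. c i * Omega m i k) = 0" and i: "i < 2*m"
  shows "c i = 0"
proof -
  have "c j = 0" "c (j + m) = 0" if j: "j < m" for j
    using z[of "j + m"] z[of j] j
    by (simp_all add: Omega_upper_right Omega_lower_left sum_delta_mult_right)
  moreover have "i < m \<or> (\<exists>j. j < m \<and> i = j + m)" using i by presburger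
  ultimately show ?thesis by auto
qed

section \<open>The LCS structure of a semidirect form\<close>

lemma lie_algebra_bilinear: "lie_algebra br \<Longrightarrow> bilinear br"
  and lie_algebra_alternating: "lie_algebra br \<Longrightarrow> br x x = 0"
  unfolding lie_algebra_def by blast+

lemma lie_algebra_antisym:
  assumes "lie_algebra br"
  shows "br y x = - br x y"
  using lie_algebra_alternating[OF assms, of "x + y"] lie_algebra_alternating[OF assms, of x]
    lie_algebra_alternating[OF assms, of y] bilinear_ladd[OF lie_algebra_bilinear[OF assms]]
    bilinear_radd[OF lie_algebra_bilinear[OF assms]]
  by (simp add: eq_neg_iff_add_eq_0 add.commute)

locale semidirect_lie_algebra =
  fixes br :: "'a::euclidean_space \<Rightarrow> 'a \<Rightarrow> 'a" and n :: nat and e :: "nat \<Rightarrow> 'a"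
    and mu lam :: real and w :: "nat \<Rightarrow> real" and B :: "nat \<Rightarrow> nat \<Rightarrow> real"
  assumes lie: "lie_algebra br" and semidirect: "semidirect_form br n e mu lam w B"
begin

(* A definition rather than an abbreviation: the simplifier rewrites 2*n+2 to Suc (Suc (2*n))
  inside dual_coord, after which coord_basis no longer applies. *)
definition coord :: "nat \<Rightarrow> 'a \<Rightarrow> real" where "coord = dual_coord (2*n+2) e"
abbreviation om :: "'a \<Rightarrow> 'a \<Rightarrow> real" where "om \<equiv> omega_std n e"

lemma basis: "is_basis_fam (2*n+2) e"
  and B_in_sp: "in_sp n B"
  and bracket_ideal: "1 \<le> a \<Longrightarrow> a < 2*n+2 \<Longrightarrow> 1 \<le> b \<Longrightarrow> b < 2*n+2 \<Longrightarrow> br (e a) (e b) = 0"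
  and bracket_e0_e1: "br (e 0) (e 1) = mu *\<^sub>R e 1"
  and bracket_e0_e: "j < 2*n \<Longrightarrow> br (e 0) (e (j+2)) =
        w j *\<^sub>R e 1 + (\<Sum>i<2*n. ((if i = j then lam else 0) + B i j) *\<^sub>R e (i+2))"
  using semidirect unfolding semidirect_form_def by auto

lemmas bracket_bilinear = lie_algebra_bilinear[OF lie]
lemmas bracket_simps = bilinear_ladd[OF bracket_bilinear] bilinear_radd[OF bracket_bilinear]
  bilinear_lmul[OF bracket_bilinear] bilinear_rmul[OF bracket_bilinear]

lemma coord_basis: "j < 2*n+2 \<Longrightarrow> coord k (e j) = (if k = j then 1 else 0)"
  unfolding coord_def using dual_coord_basis[OF basis] .

lemma linear_coord: "linear (coord k)"
  unfolding coord_def by (rule linear_dual_coord[OF basis])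

lemmas coord_simps [simp] = linear_add[OF linear_coord] linear_scale[OF linear_coord]
  linear_diff[OF linear_coord] linear_neg[OF linear_coord] linear_0[OF linear_coord]
  linear_sum[OF linear_coord]

lemma omega_std_coord: "om x y = coord 0 x * coord 1 y - coord 0 y * coord 1 x +
       (\<Sum>i<n. coord (i+2) x * coord (i+n+2) y - coord (i+2) y * coord (i+n+2) x)"
  unfolding omega_std_def Let_def coord_def ..

lemma omega_std_basis:
  assumes a: "a < 2*n+2" and b: "b < 2*n+2"
  shows "om (e a) (e b) = (if a = 0 \<and> b = 1 then 1 else if a = 1 \<and> b = 0 then -1
            else if 2 \<le> a \<and> 2 \<le> b then Omega n (a-2) (b-2) else 0)"
proof -
  have pair: "(\<Sum>i<n. (if i + 2 = a then 1 else 0) * (if i + n + 2 = b then (1::real) else 0))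
     = (if 2 \<le> a \<and> a - 2 < n \<and> b = a + n then 1 else 0)" for a b
  proof -
    have "(\<Sum>i<n. (if i + 2 = a then 1 else 0) * (if i + n + 2 = b then (1::real) else 0))
      = (\<Sum>i<n. if i = a - 2 then (if 2 \<le> a \<and> b = a + n then 1 else 0) else 0)"
      by (rule sum.cong) auto
    then show ?thesis by simp
  qed
  have E: "om (e a) (e b) = (if 0 = a then 1 else 0) * (if 1 = b then 1 else 0)
      - (if 0 = b then 1 else 0) * (if 1 = a then 1 else 0)
      + ((if 2 \<le> a \<and> a - 2 < n \<and> b = a + n then 1 else 0)
         - (if 2 \<le> b \<and> b - 2 < n \<and> a = b + n then 1 else 0))"
    unfolding omega_std_coord pair[symmetric] sum_subtractf[symmetric]
    using a b by (simp add: coord_basis add.assoc)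
  show ?thesis
    by (cases rule: less_add_2_cases[OF a]; cases rule: less_add_2_cases[OF b])
      (use E in \<open>auto simp: Omega_def\<close>)
qed

lemma bilinear_omega_std: "bilinear om"
  unfolding bilinear_def
proof (intro conjI allI)
  show "linear (om x)" for x
    by (rule linearI) (simp_all add: omega_std_coord algebra_simps sum_distrib_left
        flip: sum.distrib sum_subtractf)
  show "linear (\<lambda>x. om x y)" for y
    by (rule linearI) (simp_all add: omega_std_coord algebra_simps sum_distrib_left
        flip: sum.distrib sum_subtractf)
qed

lemmas omega_simps = bilinear_ladd[OF bilinear_omega_std] bilinear_radd[OF bilinear_omega_std]
  bilinear_lmul[OF bilinear_omega_std] bilinear_rmul[OF bilinear_omega_std]
  bilinear_lzero[OF bilinear_omega_std] bilinear_lneg[OF bilinear_omega_std]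
  bilinear_lsum[OF bilinear_omega_std] bilinear_rsum[OF bilinear_omega_std]

lemma omega_std_self: "om x x = 0"
  by (simp add: omega_std_coord)

lemma omega_std_antisym: "om y x = - om x y"
  using alternating_antisym[OF bilinear_omega_std omega_std_self] .

lemma omega_std_pairing:
  "om x (e 1) = coord 0 x" "om x (e 0) = - coord 1 x"
  "i < n \<Longrightarrow> om x (e (i+2)) = - coord (i+n+2) x"
  "i < n \<Longrightarrow> om x (e (i+n+2)) = coord (i+2) x"
proof -
  have om_e: "om x (e j) = coord 0 x * (if 1 = j then 1 else 0) - (if 0 = j then 1 else 0) * coord 1 x
      + (\<Sum>k<n. coord (k+2) x * (if k+n+2 = j then 1 else 0) - (if k+2 = j then 1 else 0) * coord (k+n+2) x)"
    if "j < 2*n+2" for j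
    unfolding omega_std_coord using that by (simp add: coord_basis)
  show "om x (e 1) = coord 0 x" "om x (e 0) = - coord 1 x" using om_e[of 0] om_e[of 1] by simp_all
  assume i: "i < n"
  have "(\<Sum>k<n. coord (k+2) x * (if k+n+2 = i+2 then 1 else 0) - (if k+2 = i+2 then 1 else 0) * coord (k+n+2) x)
      = (\<Sum>k<n. if k = i then - coord (i+n+2) x else 0)"
    using i by (intro sum.cong) auto
  then show "om x (e (i+2)) = - coord (i+n+2) x" using om_e[of "i+2"] i by simp
  have "(\<Sum>k<n. coord (k+2) x * (if k+n+2 = i+n+2 then 1 else 0) - (if k+2 = i+n+2 then 1 else 0) * coord (k+n+2) x)
      = (\<Sum>k<n. if k = i then coord (i+2) x else 0)"
    using i by (intro sum.cong) auto
  then show "om x (e (i+n+2)) = coord (i+2) x" using om_e[of "i+n+2"] i by simp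
qed

lemma omega_std_nondegenerate:
  assumes "\<And>y. om x y = 0"
  shows "x = 0"
proof -
  have "coord k x = 0" if k: "k < 2*n+2" for k
  proof -
    consider "k = 0" | "k = 1" | "2 \<le> k" "k < n + 2" | "n + 2 \<le> k" by linarith
    then show ?thesis
    proof cases
      case 3
      then obtain i where "i < n" "k = i + 2" by (intro that[of "k - 2"]) auto
      then show ?thesis using assms omega_std_pairing(4)[where i=i and x=x] by simp
    next
      case 4
      then obtain i where "i < n" "k = i + n + 2" using k by (intro that[of "k - n - 2"]) auto
      then show ?thesis using assms omega_std_pairing(3)[where i=i and x=x] by simp
    qed (use assms omega_std_pairing(1,2)[where x=x] in simp_all)
  qed
  then show ?thesis using dual_coord_expansion[OF basis, of x] unfolding coord_def by simp
qed

definition lee :: "'a \<Rightarrow> real" where "lee x = - 2 * lam * coord 0 x"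

lemma linear_lee: "linear lee"
  by (rule linearI) (simp_all add: lee_def algebra_simps)

lemma lee_basis: "j < 2*n+2 \<Longrightarrow> lee (e j) = (if j = 0 then - 2 * lam else 0)"
  unfolding lee_def using coord_basis[of j 0] by simp

lemma coord_0_bracket_e0: "1 \<le> b \<Longrightarrow> b < 2*n+2 \<Longrightarrow> coord 0 (br (e 0) (e b)) = 0"
proof (cases "b = 1")
  case True
  then show ?thesis using bracket_e0_e1 coord_basis[of 1 0] by simp
next
  case False
  moreover assume "1 \<le> b" "b < 2*n+2"
  ultimately obtain j where "j < 2*n" "b = j + 2" by (intro that[of "b - 2"]) auto
  then show ?thesis using bracket_e0_e coord_basis by simp
qed

lemma coord_0_bracket: "coord 0 (br x y) = 0"
proof (rule bilinear_eq_0_on_span[of "\<lambda>x y. coord 0 (br x y)"])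
  show "linear (\<lambda>x. coord 0 (br x y))" "linear (\<lambda>y. coord 0 (br x y))" for x y
    by (rule linearI; simp add: bracket_simps)+
  show "span (e ` {..<2*n+2}) = UNIV" using basis unfolding is_basis_fam_def by blast
  fix a b assume "a \<in> e ` {..<2*n+2}" "b \<in> e ` {..<2*n+2}"
  then obtain i j where ij: "i < 2*n+2" "j < 2*n+2" "a = e i" "b = e j" by auto
  consider "i = 0" "j = 0" | "i = 0" "j \<noteq> 0" | "i \<noteq> 0" "j = 0" | "i \<noteq> 0" "j \<noteq> 0" by blast
  then show "coord 0 (br a b) = 0"
    by cases (use ij coord_0_bracket_e0 bracket_ideal lie_algebra_alternating[OF lie]
        lie_algebra_antisym[OF lie, of "e i" "e 0"] in auto)
qed

lemma omega_std_e1: "1 \<le> b \<Longrightarrow> b < 2*n+2 \<Longrightarrow> om (e 1) (e b) = 0"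
  using omega_std_basis[of 1 b] by simp

lemma omega_std_bracket_e0_e1: "1 \<le> b \<Longrightarrow> b < 2*n+2 \<Longrightarrow> om (br (e 0) (e 1)) (e b) = 0"
  unfolding bracket_e0_e1 using omega_std_e1 by (simp add: omega_simps)

lemma omega_std_bracket_e0_e:
  assumes p: "p < 2*n"
  shows "om (br (e 0) (e (p+2))) (e 1) = 0"
    and "q < 2*n \<Longrightarrow> om (br (e 0) (e (p+2))) (e (q+2)) =
           (\<Sum>r<2*n. ((if r = p then lam else 0) + B r p) * Omega n r q)"
  using omega_std_basis[of 1 1] omega_std_basis[of "_ + 2" 1] omega_std_basis[of 1 "q + 2"]
    omega_std_basis[of "_ + 2" "q + 2"]
  unfolding bracket_e0_e[OF p] by (simp_all add: omega_simps)

lemma omega_std_bracket_e0: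
  assumes a: "1 \<le> a" "a < 2*n+2" and b: "1 \<le> b" "b < 2*n+2"
  shows "om (br (e 0) (e a)) (e b) - om (br (e 0) (e b)) (e a) = 2 * lam * om (e a) (e b)"
proof -
  have e1: "om (e 1) (e 1) = 0" "q < 2*n \<Longrightarrow> om (e 1) (e (q+2)) = 0"
      "q < 2*n \<Longrightarrow> om (e (q+2)) (e 1) = 0" for q
    using omega_std_basis[of 1 "q+2"] omega_std_basis[of "q+2" 1] by (simp_all add: omega_std_self)
  show ?thesis
  proof (cases rule: less_add_2_cases[OF a(2)]; cases rule: less_add_2_cases[OF b(2)])
    fix p q assume "p < 2*n" "a = p + 2" "q < 2*n" "b = q + 2"
    then show ?thesis
      using omega_std_bracket_e0_e(2) in_sp_Omega_identity[OF B_in_sp] omega_std_basis[of a b] by simp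
  qed (use a b e1 omega_std_bracket_e0_e1 omega_std_bracket_e0_e(1) in simp_all)
qed

definition lcs_defect :: "'a \<Rightarrow> 'a \<Rightarrow> 'a \<Rightarrow> real" where
  "lcs_defect x y z = ce_d2 br om x y z - wedge12 lee om x y z"

lemma lcs_defect_linear:
  "linear (\<lambda>x. lcs_defect x y z)" "linear (\<lambda>y. lcs_defect x y z)" "linear (\<lambda>z. lcs_defect x y z)"
  by (rule linearI;
      simp add: lcs_defect_def ce_d2_def wedge12_def bracket_simps omega_simps lee_def algebra_simps)+

lemma lcs_defect_swap:
  "lcs_defect y x z = - lcs_defect x y z" "lcs_defect x z y = - lcs_defect x y z"
  using lie_algebra_antisym[OF lie, of y x] omega_std_antisym[of y x]
    lie_algebra_antisym[OF lie, of z y] omega_std_antisym[of z y]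
  unfolding lcs_defect_def ce_d2_def wedge12_def by (simp_all add: omega_simps)

lemma lcs_defect_e0:
  assumes j: "j < 2*n+2" and k: "k < 2*n+2"
  shows "lcs_defect (e 0) (e j) (e k) = 0"
proof (cases "j = 0 \<or> k = 0")
  case True
  then show ?thesis
    using lcs_defect_swap(1)[of "e 0" "e 0"] lcs_defect_swap(2)[of "e 0" "e 0" "e j"] by auto
next
  case False
  then have "br (e j) (e k) = 0" using bracket_ideal j k by simp
  then show ?thesis
    using omega_std_bracket_e0[of j k] lee_basis[of 0] lee_basis[OF j] lee_basis[OF k] j k False
      omega_std_antisym[of "e j" "br (e 0) (e k)"]
    unfolding lcs_defect_def ce_d2_def wedge12_def by (simp add: omega_simps algebra_simps)
qed

lemma lcs_defect_basis:
  assumes i: "i < 2*n+2" and j: "j < 2*n+2" and k: "k < 2*n+2"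
  shows "lcs_defect (e i) (e j) (e k) = 0"
proof -
  consider "i = 0" | "j = 0" | "k = 0" | "i \<noteq> 0" "j \<noteq> 0" "k \<noteq> 0" by blast
  then show ?thesis
  proof cases
    case 4
    then have "br (e i) (e j) = 0" "br (e i) (e k) = 0" "br (e j) (e k) = 0"
      using bracket_ideal i j k by auto
    then show ?thesis using 4 lee_basis i j k
      unfolding lcs_defect_def ce_d2_def wedge12_def by (simp add: omega_simps)
  next
    case 1
    then show ?thesis using lcs_defect_e0[OF j k] by simp
  next
    case 2
    then show ?thesis using lcs_defect_swap(1)[of "e i" "e 0" "e k"] lcs_defect_e0[OF i k] by simp
  next
    case 3
    then show ?thesis
      using lcs_defect_swap(2)[of "e i" "e 0" "e j"] lcs_defect_swap(1)[of "e i" "e 0" "e j"]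
        lcs_defect_e0[OF i j] by simp
  qed
qed

theorem LCS_omega_std:
  assumes "lam \<noteq> 0"
  shows "LCS br om (\<lambda>x. - 2 * lam * dual_coord (2*n+2) e 0 x)"
proof -
  have lee_eq: "(\<lambda>x. - 2 * lam * dual_coord (2*n+2) e 0 x) = lee"
    unfolding lee_def coord_def ..
  have "lee \<noteq> (\<lambda>x. 0)" using lee_basis[of 0] assms by auto
  moreover have "lcs_defect x y z = 0" for x y z
  proof (rule trilinear_eq_0_on_span[of lcs_defect, OF lcs_defect_linear])
    show "span (e ` {..<2*n+2}) = UNIV" using basis unfolding is_basis_fam_def by blast
  qed (auto intro: lcs_defect_basis)
  moreover have "lee (br x y) = 0" for x y
    unfolding lee_def coord_0_bracket by simp
  ultimately show ?thesis
    unfolding LCS_def lee_eq lcs_defect_def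
    using bilinear_omega_std omega_std_self omega_std_nondegenerate linear_lee by auto
qed

definition trace_ad :: "'a \<Rightarrow> real" where
  "trace_ad x = (\<Sum>i<2*n+2. coord i (br x (e i)))"

lemma trace_ad_eq: "(\<Sum>b\<in>Basis. br x b \<bullet> b) = trace_ad x"
  unfolding trace_ad_def coord_def
  by (rule trace_in_basis[OF basis]) (use bracket_bilinear in \<open>simp add: bilinear_def\<close>)

lemma linear_trace_ad: "linear trace_ad"
  by (rule linearI)
    (simp_all add: trace_ad_def bracket_simps sum.distrib sum_distrib_left del: sum.lessThan_Suc)

lemma trace_ad_expand:
  "trace_ad x = coord 0 (br x (e 0)) + coord 1 (br x (e 1)) + (\<Sum>i<2*n. coord (i+2) (br x (e (i+2))))"
  unfolding trace_ad_def using sum_lessThan_Suc_Suc[of "\<lambda>i. coord i (br x (e i))" "2*n"] by simp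

lemma trace_ad_ideal: "1 \<le> j \<Longrightarrow> j < 2*n+2 \<Longrightarrow> trace_ad (e j) = 0"
  unfolding trace_ad_expand
  using bracket_ideal[of j] lie_algebra_antisym[OF lie, of "e j" "e 0"] coord_0_bracket_e0[of j] by simp

lemma trace_ad_e0: "trace_ad (e 0) = mu + 2 * real n * lam"
proof -
  have "coord (i+2) (br (e 0) (e (i+2))) = lam + B i i" if i: "i < 2*n" for i
  proof -
    have "coord (i+2) (br (e 0) (e (i+2))) =
        (\<Sum>a<2*n. ((if a = i then lam else 0) + B a i) * (if i = a then 1 else 0))"
      using bracket_e0_e[OF i] i by (simp add: coord_basis)
    also have "\<dots> = (\<Sum>a<2*n. if a = i then lam + B i i else 0)" by (rule sum.cong) auto
    finally show ?thesis using i by simp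
  qed
  then have "(\<Sum>i<2*n. coord (i+2) (br (e 0) (e (i+2)))) = 2 * real n * lam"
    using in_sp_trace[OF B_in_sp] by (simp add: sum.distrib)
  then show ?thesis
    unfolding trace_ad_expand using lie_algebra_alternating[OF lie] bracket_e0_e1 coord_basis[of 1 1] by simp
qed

theorem unimodular_iff:
  assumes "1 \<le> n"
  shows "unimodular br \<longleftrightarrow> lam = - mu / (2 * real n)"
proof -
  have "unimodular br \<longleftrightarrow> (\<forall>x. trace_ad x = 0)" unfolding unimodular_def trace_ad_eq ..
  also have "\<dots> \<longleftrightarrow> trace_ad (e 0) = 0"
  proof
    assume e0: "trace_ad (e 0) = 0"
    have "trace_ad (e j) = 0" if "j < 2*n+2" for j
      using that e0 trace_ad_ideal[of j] by (cases j) auto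
    then show "\<forall>x. trace_ad x = 0"
      using linear_eq_0_on_span[OF linear_trace_ad, of "e ` {..<2*n+2}"] basis
      unfolding is_basis_fam_def by blast
  qed simp
  also have "\<dots> \<longleftrightarrow> lam = - mu / (2 * real n)"
    using assms unfolding trace_ad_e0 by (auto simp: field_simps)
  finally show ?thesis .
qed

end

section \<open>LCS structures force the semidirect form\<close>

locale almost_abelian_LCS =
  fixes br :: "'a::euclidean_space \<Rightarrow> 'a \<Rightarrow> 'a" and \<omega> :: "'a \<Rightarrow> 'a \<Rightarrow> real" and \<theta> :: "'a \<Rightarrow> real"
    and h :: "'a set" and n :: nat
  assumes subspace_h: "subspace h" and dim_h: "dim h = 2*n+1" and DIM: "DIM('a) = 2*n+2"
    and h_abelian: "\<And>x y. x \<in> h \<Longrightarrow> y \<in> h \<Longrightarrow> br x y = 0"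
    and h_ideal: "\<And>x y. y \<in> h \<Longrightarrow> br x y \<in> h"
    and lcs: "LCS br \<omega> \<theta>" and n_ge_2: "n \<ge> 2"
begin

lemma bilinear_omega: "bilinear \<omega>"
  and omega_self: "\<omega> x x = 0"
  and omega_nondegenerate: "(\<And>y. \<omega> x y = 0) \<Longrightarrow> x = 0"
  and linear_theta: "linear \<theta>"
  and theta_nonzero: "\<theta> \<noteq> (\<lambda>x. 0)"
  and d_omega: "ce_d2 br \<omega> x y z = wedge12 \<theta> \<omega> x y z"
  using lcs unfolding LCS_def by blast+

lemma omega_antisym: "\<omega> y x = - \<omega> x y"
  using alternating_antisym[OF bilinear_omega omega_self] .

lemmas omega_simps = bilinear_ladd[OF bilinear_omega] bilinear_radd[OF bilinear_omega]
  bilinear_lmul[OF bilinear_omega] bilinear_rmul[OF bilinear_omega]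
  bilinear_lsub[OF bilinear_omega] bilinear_rsub[OF bilinear_omega]
  bilinear_lzero[OF bilinear_omega] bilinear_rzero[OF bilinear_omega]
  bilinear_lsum[OF bilinear_omega] bilinear_rsum[OF bilinear_omega]

definition f1 :: 'a where "f1 = (SOME x. x \<notin> h)"

lemma f1_notin_h: "f1 \<notin> h"
proof -
  have "dim h < DIM('a)" using dim_h DIM by simp
  then have "h \<noteq> UNIV" by auto
  then have "\<exists>x. x \<notin> h" by auto
  then show ?thesis unfolding f1_def by (rule someI_ex)
qed

lemma decompose_along_f1: "\<exists>t. x - t *\<^sub>R f1 \<in> h"
proof -
  have "dim (insert f1 h) = DIM('a)"
    using f1_notin_h subspace_h dim_h DIM by (simp add: dim_insert span_eq_iff[THEN iffD2])
  then have "x \<in> span (insert f1 h)" using dim_eq_full by blast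
  then show ?thesis unfolding span_insert using subspace_h by (simp add: span_eq_iff[THEN iffD2])
qed

lemma f1_independent_of_h:
  assumes "t *\<^sub>R f1 + y = 0" and "y \<in> h"
  shows "t = 0"
proof (rule ccontr)
  assume "t \<noteq> 0"
  then have "f1 = (- 1 / t) *\<^sub>R y"
    using assms(1) by (simp add: eq_neg_iff_add_eq_0[symmetric] field_simps)
  then show False
    using f1_notin_h subspace_neg[OF subspace_h subspace_scale[OF subspace_h assms(2)]] by simp
qed

lemma eq_0_if_omega_orthogonal:
  assumes "\<omega> x f1 = 0" and "\<And>y. y \<in> h \<Longrightarrow> \<omega> x y = 0"
  shows "x = 0"
proof (rule omega_nondegenerate)
  fix y
  obtain t where t: "y - t *\<^sub>R f1 \<in> h" using decompose_along_f1 by blast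
  have "\<omega> x y = \<omega> x (y - t *\<^sub>R f1) + t * \<omega> x f1" by (simp add: omega_simps)
  then show "\<omega> x y = 0" using assms t by simp
qed

definition radical :: "'a set" where "radical = {r\<in>h. \<forall>y\<in>h. \<omega> r y = 0}"

lemma radical_line:
  assumes k0: "k0 \<in> radical" "k0 \<noteq> 0" and k: "k \<in> radical"
  shows "\<omega> k0 f1 \<noteq> 0" and "k = (\<omega> k f1 / \<omega> k0 f1) *\<^sub>R k0"
proof -
  have k0h: "\<And>y. y \<in> h \<Longrightarrow> \<omega> k0 y = 0" and kh: "\<And>y. y \<in> h \<Longrightarrow> \<omega> k y = 0"
    using k0(1) k unfolding radical_def by blast+
  show nz: "\<omega> k0 f1 \<noteq> 0"
    using eq_0_if_omega_orthogonal[of k0] k0h k0(2) by blast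
  have "k - (\<omega> k f1 / \<omega> k0 f1) *\<^sub>R k0 = 0"
    using nz kh k0h by (intro eq_0_if_omega_orthogonal) (simp_all add: omega_simps)
  then show "k = (\<omega> k f1 / \<omega> k0 f1) *\<^sub>R k0" by simp
qed

lemma dim_radical: "dim radical \<le> 1"
proof (cases "\<exists>k0\<in>radical. k0 \<noteq> 0")
  case True
  then obtain k0 where k0: "k0 \<in> radical" "k0 \<noteq> 0" by auto
  have "radical \<subseteq> span {k0}"
  proof
    fix k assume "k \<in> radical"
    then show "k \<in> span {k0}"
      using radical_line(2)[OF k0] span_scale[OF span_base[OF singletonI]] by metis
  qed
  then have "dim radical \<le> card {k0}" by (rule dim_le_card) simp
  then show ?thesis by simp
next
  case False
  then have "dim radical = 0" by auto
  then show ?thesis by linarith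
qed

(* If theta z \<noteq> 0 for some z in h, then d omega = theta \<and> omega on h \<times> h \<times> h puts
  h \<inter> ker theta \<inter> ker omega(z,-) into the radical; this is the only use of n \<ge> 2. *)
lemma theta_vanishes_on_h:
  assumes z: "z \<in> h"
  shows "\<theta> z = 0"
proof (rule ccontr)
  assume tz: "\<theta> z \<noteq> 0"
  define K1 where "K1 = {x\<in>h. \<theta> x = 0}"
  define K2 where "K2 = {x\<in>K1. \<omega> z x = 0}"
  have sK1: "subspace K1"
    unfolding K1_def using subspace_h linear_theta
    by (auto simp: subspace_def linear_add linear_scale linear_0)
  have "linear (\<omega> z)" using bilinear_omega unfolding bilinear_def by blast
  then have "dim h \<le> dim K2 + 2"
    using dim_le_dim_kernel_plus_1[OF subspace_h linear_theta] dim_le_dim_kernel_plus_1[OF sK1]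
    unfolding K1_def K2_def by fastforce
  moreover have "K2 \<subseteq> radical"
  proof
    fix k assume "k \<in> K2"
    then have kh: "k \<in> h" "\<theta> k = 0" "\<omega> z k = 0" unfolding K2_def K1_def by auto
    have "\<omega> k y = 0" if y: "y \<in> h" for y
    proof -
      have "ce_d2 br \<omega> z k y = 0" unfolding ce_d2_def using h_abelian z kh(1) y by (simp add: omega_simps)
      then have "\<theta> z * \<omega> k y = 0" using d_omega[of z k y] kh unfolding wedge12_def by simp
      then show ?thesis using tz by simp
    qed
    then show "k \<in> radical" unfolding radical_def using kh by auto
  qed
  then have "dim K2 \<le> 1" using dim_subset dim_radical order_trans by blast
  ultimately show False using dim_h n_ge_2 by linarith
qed

definition lam :: real where "lam = - \<theta> f1 / 2"

lemma lam_nonzero: "lam \<noteq> 0"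
proof
  assume "lam = 0"
  have "\<theta> x = 0" for x
  proof -
    obtain t where t: "x - t *\<^sub>R f1 \<in> h" using decompose_along_f1 by blast
    have "\<theta> x = \<theta> (x - t *\<^sub>R f1) + t * \<theta> f1" by (simp add: linear_diff[OF linear_theta] linear_scale[OF linear_theta])
    then show ?thesis using theta_vanishes_on_h[OF t] \<open>lam = 0\<close> unfolding lam_def by simp
  qed
  then show False using theta_nonzero by auto
qed

lemma ad_f1_conformal:
  assumes y: "y \<in> h" and z: "z \<in> h"
  shows "\<omega> (br f1 y) z + \<omega> y (br f1 z) = 2 * lam * \<omega> y z"
proof -
  have "ce_d2 br \<omega> f1 y z = - \<omega> (br f1 y) z - \<omega> y (br f1 z)"
    unfolding ce_d2_def using h_abelian[OF y z] omega_antisym[of y "br f1 z"] by (simp add: omega_simps)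
  moreover have "wedge12 \<theta> \<omega> f1 y z = \<theta> f1 * \<omega> y z"
    unfolding wedge12_def using theta_vanishes_on_h[OF y] theta_vanishes_on_h[OF z] by simp
  ultimately show ?thesis using d_omega[of f1 y z] unfolding lam_def by simp
qed

end

locale almost_abelian_LCS_frame = almost_abelian_LCS +
  fixes m :: nat and u v :: "nat \<Rightarrow> 'a"
  assumes frame: "darboux_frame \<omega> h m u v"
begin

abbreviation proj :: "'a \<Rightarrow> 'a" where "proj \<equiv> symplectic_projection \<omega> m u v"

definition q :: "nat \<Rightarrow> 'a" where "q i = (if i < m then u i else v (i - m))"

lemma q_in_h: "i < 2*m \<Longrightarrow> q i \<in> h"
  using frame unfolding darboux_frame_def q_def by (cases "i < m") auto

lemma omega_q: assumes i: "i < 2*m" and k: "k < 2*m" shows "\<omega> (q i) (q k) = Omega m i k"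
proof -
  have rel: "\<omega> (u i) (v j) = (if i = j then 1 else 0)" "\<omega> (u i) (u j) = 0" "\<omega> (v i) (v j) = 0"
    if "i < m" "j < m" for i j
    using frame that unfolding darboux_frame_def by blast+
  consider "i < m" "k < m" | "i < m" "m \<le> k" | "m \<le> i" "k < m" | "m \<le> i" "m \<le> k" by linarith
  then show ?thesis
  proof cases
    case 3
    then obtain j where j: "j < m" "i = j + m" using i by (intro that[of "i - m"]) auto
    then show ?thesis using 3 rel(1)[of k j] omega_antisym[of "u k" "v j"]
      by (auto simp: q_def Omega_def)
  qed (use rel i k in \<open>auto simp: q_def Omega_def\<close>)
qed

definition frame_coeff :: "'a \<Rightarrow> nat \<Rightarrow> real" where
  "frame_coeff x i = (if i < m then \<omega> x (q (i + m)) else - \<omega> x (q (i - m)))"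

lemma proj_eq: "proj x = (\<Sum>i<2*m. frame_coeff x i *\<^sub>R q i)"
  unfolding sum_lessThan_double symplectic_projection_def
  by (simp add: frame_coeff_def q_def sum_subtractf sum.distrib sum_negf)

lemma omega_sum_q: assumes k: "k < 2*m"
  shows "\<omega> (\<Sum>i<2*m. c i *\<^sub>R q i) (q k) = (\<Sum>i<2*m. c i * Omega m i k)"
    and "\<omega> (q k) (\<Sum>i<2*m. c i *\<^sub>R q i) = (\<Sum>i<2*m. Omega m k i * c i)"
proof -
  have "(\<Sum>i<2*m. c i * \<omega> (q i) (q k)) = (\<Sum>i<2*m. c i * Omega m i k)"
    "(\<Sum>i<2*m. c i * \<omega> (q k) (q i)) = (\<Sum>i<2*m. Omega m k i * c i)"
    using k by (auto intro!: sum.cong simp: omega_q)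
  then show "\<omega> (\<Sum>i<2*m. c i *\<^sub>R q i) (q k) = (\<Sum>i<2*m. c i * Omega m i k)"
    and "\<omega> (q k) (\<Sum>i<2*m. c i *\<^sub>R q i) = (\<Sum>i<2*m. Omega m k i * c i)"
    by (simp_all add: omega_simps)
qed

lemma q_coeffs_unique:
  assumes "(\<Sum>i<2*m. c i *\<^sub>R q i) = 0"
  shows "\<forall>i<2*m. c i = 0"
proof -
  have "(\<Sum>i<2*m. c i * Omega m i k) = 0" if "k < 2*m" for k
    using omega_sum_q(1)[OF that, of c] assms by (simp add: omega_simps)
  then show ?thesis using Omega_combination_eq_0 by blast
qed

lemma sum_q_in_h: "(\<Sum>i<2*m. c i *\<^sub>R q i) \<in> h"
  by (rule subspace_sum[OF subspace_h]) (simp add: subspace_scale[OF subspace_h] q_in_h)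

lemma proj_in_span: "proj x \<in> span (q ` {..<2*m})"
  unfolding proj_eq by (rule span_sum) (simp add: span_scale span_base)

lemma minus_proj_in_radical:
  assumes "x \<in> h"
  shows "x - proj x \<in> radical"
proof -
  have "x - proj x \<in> h" unfolding proj_eq using assms by (rule subspace_diff[OF subspace_h _ sum_q_in_h])
  moreover have "\<forall>y\<in>h. \<omega> (x - proj x) y = 0" using frame assms unfolding darboux_frame_def by blast
  ultimately show ?thesis unfolding radical_def by blast
qed

(* h is spanned by the 2m vectors q i and the radical, and dim h is odd. *)
lemma radical_nonzero: "\<exists>f\<in>radical. f \<noteq> 0"
proof (rule ccontr)
  assume "\<not> (\<exists>f\<in>radical. f \<noteq> 0)"
  then have "h \<subseteq> span (q ` {..<2*m})"
    using minus_proj_in_radical proj_in_span by (metis diff_eq_eq subsetI add_0)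
  then have "dim h \<le> dim (q ` {..<2*m})" by (metis dim_span dim_subset)
  moreover have "dim (q ` {..<2*m}) \<le> dim h" using q_in_h by (intro dim_subset) auto
  moreover have "dim (q ` {..<2*m}) = 2*m"
    using dim_image_if_coeffs_unique[where N="2*m" and g=q] q_coeffs_unique by blast
  ultimately have "2*n+1 = 2*m" using dim_h by linarith
  then show False by presburger
qed

definition f2 :: 'a where "f2 = (SOME f. f \<in> radical \<and> f \<noteq> 0)"

lemma f2_radical: "f2 \<in> radical" and f2_nonzero: "f2 \<noteq> 0"
  using someI_ex[of "\<lambda>f. f \<in> radical \<and> f \<noteq> 0"] radical_nonzero unfolding f2_def by auto

lemma f2_in_h: "f2 \<in> h" and omega_f2: "y \<in> h \<Longrightarrow> \<omega> f2 y = 0" "y \<in> h \<Longrightarrow> \<omega> y f2 = 0"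
  using f2_radical omega_antisym[of f2 y] unfolding radical_def by auto

lemma radical_eq_f2: "r \<in> radical \<Longrightarrow> r = (\<omega> r f1 / \<omega> f2 f1) *\<^sub>R f2"
  using radical_line(2)[OF f2_radical f2_nonzero] by blast

definition adapted_basis :: "nat \<Rightarrow> 'a" where
  "adapted_basis k = (if k = 0 then f1 else if k = 1 then f2 else q (k - 2))"

lemma adapted_basis_simps [simp]:
  "adapted_basis 0 = f1" "adapted_basis 1 = f2" "adapted_basis (Suc 0) = f2"
  "adapted_basis (Suc (Suc i)) = q i"
  unfolding adapted_basis_def by simp_all

lemma adapted_basis_coeffs_unique:
  assumes s: "(\<Sum>k<2*m+2. c k *\<^sub>R adapted_basis k) = 0"
  shows "\<forall>k<2*m+2. c k = 0"
proof -
  let ?y = "c 1 *\<^sub>R f2 + (\<Sum>i<2*m. c (i+2) *\<^sub>R q i)"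
  have s': "c 0 *\<^sub>R f1 + ?y = 0"
    using s sum_lessThan_Suc_Suc[of "\<lambda>k. c k *\<^sub>R adapted_basis k" "2*m"]
    by (simp add: add.assoc del: sum.lessThan_Suc)
  have "?y \<in> h" by (rule subspace_add[OF subspace_h subspace_scale[OF subspace_h f2_in_h] sum_q_in_h])
  then have c0: "c 0 = 0" using f1_independent_of_h[OF s'] by blast
  then have y0: "?y = 0" using s' by simp
  have "(\<Sum>i<2*m. c (i+2) * Omega m i k) = 0" if k: "k < 2*m" for k
    using arg_cong[OF y0, of "\<lambda>y. \<omega> y (q k)"] omega_f2(2)[OF q_in_h[OF k]] omega_sum_q(1)[OF k]
    by (simp add: omega_simps omega_f2 q_in_h[OF k])
  then have ci: "c (i+2) = 0" if "i < 2*m" for i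
    using Omega_combination_eq_0[of m "\<lambda>i. c (i+2)"] that by blast
  then have "c 1 = 0" using y0 f2_nonzero by simp
  then show ?thesis using c0 ci by (metis less_add_2_cases)
qed

lemma adapted_basis_span: "span (adapted_basis ` {..<2*m+2}) = UNIV"
proof -
  let ?S = "span (adapted_basis ` {..<2*m+2})"
  have basis_S: "adapted_basis k \<in> ?S" if "k < 2*m+2" for k
    using that by (intro span_base) auto
  then have f12: "f1 \<in> ?S" "f2 \<in> ?S" using basis_S[of 0] basis_S[of 1] by simp_all
  have "q ` {..<2*m} \<subseteq> ?S" using basis_S[of "_ + 2"] by auto
  then have "span (q ` {..<2*m}) \<subseteq> ?S" by (rule span_minimal) simp
  then have proj_S: "proj y \<in> ?S" for y using proj_in_span by blast
  have "x \<in> ?S" for x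
  proof -
    obtain t where t: "x - t *\<^sub>R f1 \<in> h" using decompose_along_f1 by blast
    define y where "y = x - t *\<^sub>R f1"
    have "x = t *\<^sub>R f1 + (\<omega> (y - proj y) f1 / \<omega> f2 f1) *\<^sub>R f2 + proj y"
      using radical_eq_f2[OF minus_proj_in_radical[OF t]] unfolding y_def by (simp add: algebra_simps)
    then show ?thesis using f12 proj_S by (metis span_add span_scale)
  qed
  then show ?thesis by auto
qed

lemma is_basis_fam_adapted_basis: "is_basis_fam (2*m+2) adapted_basis"
  unfolding is_basis_fam_def using adapted_basis_coeffs_unique adapted_basis_span by blast

lemma m_eq_n: "m = n"
  using is_basis_fam_card[OF is_basis_fam_adapted_basis] DIM by simp

definition mu :: real where "mu = \<omega> (br f1 f2) f1 / \<omega> f2 f1"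

lemma ad_f1_f2: "br f1 f2 = mu *\<^sub>R f2"
proof -
  have "\<omega> (br f1 f2) z = 0" if z: "z \<in> h" for z
    using ad_f1_conformal[OF f2_in_h z] omega_f2(1)[OF z] omega_f2(1)[OF h_ideal[OF z]] by simp
  then have "br f1 f2 \<in> radical" unfolding radical_def using h_ideal[OF f2_in_h] by blast
  then show ?thesis unfolding mu_def by (rule radical_eq_f2)
qed

definition ad_coeff :: "nat \<Rightarrow> nat \<Rightarrow> real" where "ad_coeff i j = frame_coeff (br f1 (q j)) i"
definition sp_part :: "nat \<Rightarrow> nat \<Rightarrow> real" where "sp_part i j = ad_coeff i j - (if i = j then lam else 0)"
definition f2_coeff :: "nat \<Rightarrow> real" where
  "f2_coeff j = \<omega> (br f1 (q j) - proj (br f1 (q j))) f1 / \<omega> f2 f1"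

lemma ad_f1_q:
  assumes j: "j < 2*m"
  shows "br f1 (q j) = f2_coeff j *\<^sub>R f2 + (\<Sum>i<2*m. ad_coeff i j *\<^sub>R q i)"
  using radical_eq_f2[OF minus_proj_in_radical[OF h_ideal[OF q_in_h[OF j]]]]
  unfolding f2_coeff_def ad_coeff_def proj_eq by (simp add: algebra_simps)

lemma omega_ad_f1_q:
  assumes i: "i < 2*m" and k: "k < 2*m"
  shows "\<omega> (br f1 (q i)) (q k) = (\<Sum>j<2*m. ad_coeff j i * Omega m j k)"
    and "\<omega> (q i) (br f1 (q k)) = (\<Sum>j<2*m. Omega m i j * ad_coeff j k)"
  using omega_f2 q_in_h[OF i] q_in_h[OF k] omega_sum_q(1)[OF k] omega_sum_q(2)[OF i]
  unfolding ad_f1_q[OF i] ad_f1_q[OF k] by (simp_all add: omega_simps)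

lemma in_sp_sp_part: "in_sp m sp_part"
  unfolding in_sp_def
proof (intro allI impI)
  fix i k assume i: "i < 2*m" and k: "k < 2*m"
  have "(\<Sum>j<2*m. sp_part j i * Omega m j k) = (\<Sum>j<2*m. ad_coeff j i * Omega m j k) - lam * Omega m i k"
    using i by (simp add: sp_part_def left_diff_distrib sum_subtractf sum_delta_mult_left)
  moreover have "(\<Sum>j<2*m. Omega m i j * sp_part j k) = (\<Sum>j<2*m. Omega m i j * ad_coeff j k) - Omega m i k * lam"
    using k by (simp add: sp_part_def right_diff_distrib sum_subtractf sum_delta_mult_right)
  ultimately show "(\<Sum>j<2*m. sp_part j i * Omega m j k) + (\<Sum>j<2*m. Omega m i j * sp_part j k) = 0"
    using ad_f1_conformal[OF q_in_h[OF i] q_in_h[OF k]] omega_q[OF i k] omega_ad_f1_q[OF i k] by simp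
qed

lemma semidirect_form_adapted_basis: "semidirect_form br m adapted_basis mu lam f2_coeff sp_part"
  unfolding semidirect_form_def
proof (intro conjI ballI allI impI)
  show "is_basis_fam (2*m+2) adapted_basis" by (rule is_basis_fam_adapted_basis)
  show "in_sp m sp_part" by (rule in_sp_sp_part)
  have "adapted_basis a \<in> h" if "a \<in> {1..2*m+1}" for a
    using that f2_in_h q_in_h by (auto simp: adapted_basis_def)
  then show "br (adapted_basis a) (adapted_basis b) = 0" if "a \<in> {1..2*m+1}" "b \<in> {1..2*m+1}" for a b
    using that h_abelian by blast
  show "br (adapted_basis 0) (adapted_basis 1) = mu *\<^sub>R adapted_basis 1" using ad_f1_f2 by simp
  fix j assume j: "j < 2*m"
  have "(\<Sum>i<2*m. ((if i = j then lam else 0) + sp_part i j) *\<^sub>R adapted_basis (i+2)) = (\<Sum>i<2*m. ad_coeff i j *\<^sub>R q i)"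
    by (simp add: sp_part_def)
  then show "br (adapted_basis 0) (adapted_basis (j+2)) =
      f2_coeff j *\<^sub>R adapted_basis 1 + (\<Sum>i<2*m. ((if i = j then lam else 0) + sp_part i j) *\<^sub>R adapted_basis (i+2))"
    using ad_f1_q[OF j] by simp
qed

end

context almost_abelian_LCS
begin

theorem exists_semidirect_form: "\<exists>e mu lam w B. semidirect_form br n e mu lam w B \<and> lam \<noteq> 0"
proof -
  obtain m u v where "darboux_frame \<omega> h m u v"
    using darboux_frame_exists[OF bilinear_omega omega_self subspace_h] by blast
  then interpret almost_abelian_LCS_frame br \<omega> \<theta> h n m u v
    by unfold_locales
  show ?thesis using semidirect_form_adapted_basis lam_nonzero m_eq_n by blast
qed

end

lemma LCS_imp_semidirect_form:
  fixes br :: "'a::euclidean_space \<Rightarrow> 'a \<Rightarrow> 'a"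
  assumes "almost_abelian br" and "DIM('a) = 2*n+2" and "n \<ge> 2" and "LCS br \<omega> \<theta>"
  shows "\<exists>e mu lam w B. semidirect_form br n e mu lam w B \<and> lam \<noteq> 0"
proof -
  obtain h :: "'a set" where "subspace h" "dim h = DIM('a) - 1" "\<forall>x\<in>h. \<forall>y\<in>h. br x y = 0"
    "\<forall>x. \<forall>y\<in>h. br x y \<in> h"
    using assms(1) unfolding almost_abelian_def by blast
  then interpret almost_abelian_LCS br \<omega> \<theta> h n
    using assms(2-4) by unfold_locales auto
  show ?thesis by (rule exists_semidirect_form)
qed

theorem theorem4p1:
  fixes br :: "'a::euclidean_space \<Rightarrow> 'a \<Rightarrow> 'a" and n :: nat
  assumes "lie_algebra br" and "almost_abelian br"
    and "DIM('a) = 2*n+2" and "n \<ge> 2"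
  shows "((\<exists>\<omega> \<theta>. LCS br \<omega> \<theta>) \<longleftrightarrow>
           (\<exists>e mu lam w B. semidirect_form br n e mu lam w B \<and> lam \<noteq> 0)) \<and>
         (\<forall>e mu lam w B. semidirect_form br n e mu lam w B \<and> lam \<noteq> 0 \<longrightarrow>
            LCS br (omega_std n e) (\<lambda>x. - 2 * lam * dual_coord (2*n+2) e 0 x)) \<and>
         (\<forall>e mu lam w B. semidirect_form br n e mu lam w B \<longrightarrow>
            (unimodular br \<longleftrightarrow> lam = - mu / (2 * real n)))"
proof -
  have semidirect: "semidirect_lie_algebra br n e mu lam w B"
    if "semidirect_form br n e mu lam w B" for e mu lam w B
    using assms(1) that by unfold_locales
  have "LCS br (omega_std n e) (\<lambda>x. - 2 * lam * dual_coord (2*n+2) e 0 x)"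
    if "semidirect_form br n e mu lam w B" "lam \<noteq> 0" for e mu lam w B
    using semidirect_lie_algebra.LCS_omega_std[OF semidirect[OF that(1)] that(2)] .
  moreover have "unimodular br \<longleftrightarrow> lam = - mu / (2 * real n)"
    if "semidirect_form br n e mu lam w B" for e mu lam w B
    using semidirect_lie_algebra.unimodular_iff[OF semidirect[OF that]] assms(4) by simp
  ultimately show ?thesis
    using LCS_imp_semidirect_form[OF assms(2-4)] by blast
qed

end
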